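(* Let $\alpha>1$, $1<\beta<\alpha$, and let $H:\mathbb{R}\to\mathbb{R}$ be continuous. Let $L^\beta=L^\beta([0,1],\mathcal{B}([0,1]),\mathrm{Leb})$ be equipped with its weak topology and $\mathcal{D}^1$ be the space of real-valued càdlàg functions on $[0,1]$ with the Skorohod topology. Then the mapping $(s,\phi)\in\mathcal{D}^1\times L^\beta\mapsto\int_0^1H(s(t))|\phi(t)|^\alpha\,dt$ is $\mathcal{B}(\mathcal{D}^1\times L^\beta)$-measurable. *)

theory Defs
  imports "HOL-Analysis.Analysis"
begin

definition borel_of_top :: "'a topology \<Rightarrow> 'a measure" where
  "borel_of_top X = sigma (topspace X) {U. openin X U}"

definition Leb01 :: "real measure" where
  "Leb01 = restrict_space lborel {0..1}"

definition cadlag :: "(real \<Rightarrow> real) set" where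
  "cadlag = {s. s \<in> extensional {0..1}
     \<and> (\<forall>t\<in>{0..<1}. (s \<longlongrightarrow> s t) (at_right t))
     \<and> (\<forall>t\<in>{0<..1}. \<exists>l. (s \<longlongrightarrow> l) (at_left t))}"

definition time_changes :: "(real \<Rightarrow> real) set" where
  "time_changes = {r. continuous_on {0..1} r \<and> strict_mono_on {0..1} r
                        \<and> r ` {0..1} = {0..1}}"

definition skorohod_dist :: "(real \<Rightarrow> real) \<Rightarrow> (real \<Rightarrow> real) \<Rightarrow> real" where
  "skorohod_dist x y =
     Inf {max (SUP t\<in>{0..1}. \<bar>r t - t\<bar>) (SUP t\<in>{0..1}. \<bar>x t - y (r t)\<bar>) | r. r \<in> time_changes}"

definition skorohod_topology :: "(real \<Rightarrow> real) topology" where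
  "skorohod_topology = Metric_space.mtopology cadlag skorohod_dist"

text \<open>L^p([0,1], Borel, Leb), represented by (measurable) representatives.\<close>
definition Lp01 :: "real \<Rightarrow> (real \<Rightarrow> real) set" where
  "Lp01 p = {f. f \<in> borel_measurable Leb01 \<and> integrable Leb01 (\<lambda>t. \<bar>f t\<bar> powr p)}"

definition weak_Lp_topology :: "real \<Rightarrow> (real \<Rightarrow> real) topology" where
  "weak_Lp_topology p = topology_generated_by
     {{f \<in> Lp01 p. (\<integral>t. f t * g t \<partial>Leb01) \<in> U} | g U.
         g \<in> Lp01 (p / (p - 1)) \<and> open U}"

end

theory Submission
  imports Defs "HOL-Real_Asymp.Real_Asymp"
begin

text \<open>The Borel \<open>\<sigma>\<close>-algebra of the product topology contains the product of the two Borel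
  \<open>\<sigma>\<close>-algebras, so it suffices to write the integrand as a jointly measurable function of
  \<open>((s, \<phi>), t)\<close>, up to a \<open>t\<close>-null set. For a cadlag \<open>s\<close> and \<open>t < 1\<close>, \<open>s t\<close> is the limit of
  \<open>s\<close> at grid points approaching \<open>t\<close> from the right, and each evaluation \<open>s \<mapsto> s v\<close>, \<open>v < 1\<close>, is
  Skorohod-Borel measurable because \<open>c \<le> s v\<close> is a countable intersection of open conditions.
  For \<open>\<phi> \<in> L\<^sup>\<beta>\<close>, the averages of \<open>\<phi>\<close> over small intervals are pairings with indicator
  functions, hence weakly continuous, and by Lebesgue's differentiation theorem they recover
  \<open>\<phi>\<close> almost everywhere. Fubini's measurability theorem then gives the claim.\<close>

section \<open>Borel sets of a topology\<close>

lemma space_borel_of_top [simp]: "space (borel_of_top X) = topspace X"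
  unfolding borel_of_top_def by (rule space_measure_of) (auto dest: openin_subset)

lemma openin_imp_sets_borel_of_top: "openin X U \<Longrightarrow> U \<in> sets (borel_of_top X)"
  unfolding borel_of_top_def by (subst sets_measure_of) (auto dest: openin_subset)

lemma borel_of_top_euclidean: "borel_of_top euclidean = borel"
  unfolding borel_of_top_def borel_def by simp

lemma measurable_borel_of_top_continuous_map:
  assumes f: "continuous_map X Y f"
  shows "f \<in> borel_of_top X \<rightarrow>\<^sub>M borel_of_top Y"
  unfolding borel_of_top_def[of Y]
proof (rule measurable_measure_of)
  show "{U. openin Y U} \<subseteq> Pow (topspace Y)" by (auto dest: openin_subset)
  show "f \<in> space (borel_of_top X) \<rightarrow> topspace Y"
    using continuous_map_funspace[OF f] by simp
next
  fix U assume "U \<in> {U. openin Y U}"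
  then have "openin X {x \<in> topspace X. f x \<in> U}"
    using openin_continuous_map_preimage[OF f] by simp
  moreover have "f -` U \<inter> space (borel_of_top X) = {x \<in> topspace X. f x \<in> U}" by auto
  ultimately show "f -` U \<inter> space (borel_of_top X) \<in> sets (borel_of_top X)"
    by (simp add: openin_imp_sets_borel_of_top)
qed

lemma sets_pair_measure_subset_borel_of_top:
  "sets (borel_of_top X \<Otimes>\<^sub>M borel_of_top Y) \<subseteq> sets (borel_of_top (prod_topology X Y))"
proof -
  let ?B = "borel_of_top (prod_topology X Y)"
  have fst: "fst \<in> ?B \<rightarrow>\<^sub>M borel_of_top X" and snd: "snd \<in> ?B \<rightarrow>\<^sub>M borel_of_top Y"
    by (simp_all add: measurable_borel_of_top_continuous_map continuous_map_fst continuous_map_snd)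
  have "a \<times> b \<in> sets ?B" if a: "a \<in> sets (borel_of_top X)" and b: "b \<in> sets (borel_of_top Y)" for a b
  proof -
    have "a \<times> b = (fst -` a \<inter> space ?B) \<inter> (snd -` b \<inter> space ?B)"
      using sets.sets_into_space[OF a] sets.sets_into_space[OF b]
      by (auto simp: topspace_prod_topology)
    then show ?thesis using measurable_sets[OF fst a] measurable_sets[OF snd b] by auto
  qed
  then show ?thesis
    using sets.sigma_sets_subset[of "{a \<times> b |a b. a \<in> sets (borel_of_top X) \<and> b \<in> sets (borel_of_top Y)}" ?B]
    by (auto simp: sets_pair_measure topspace_prod_topology)
qed

lemma measurable_borel_of_top_prod_topology:
  assumes "f \<in> borel_of_top X \<Otimes>\<^sub>M borel_of_top Y \<rightarrow>\<^sub>M N"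
  shows "f \<in> borel_of_top (prod_topology X Y) \<rightarrow>\<^sub>M N"
  using measurable_mono[OF order.refl refl sets_pair_measure_subset_borel_of_top] assms
  by (auto simp: space_pair_measure topspace_prod_topology)

section \<open>Time changes and the Skorohod metric\<close>

lemma time_change_range: "r \<in> time_changes \<Longrightarrow> t \<in> {0..1} \<Longrightarrow> r t \<in> {0..1}"
  unfolding time_changes_def by blast

lemma time_change_less:
  "r \<in> time_changes \<Longrightarrow> a \<in> {0..1} \<Longrightarrow> b \<in> {0..1} \<Longrightarrow> a < b \<Longrightarrow> r a < r b"
  unfolding time_changes_def strict_mono_on_def by blast

lemma id_time_change: "(\<lambda>t. t) \<in> time_changes"
  unfolding time_changes_def by (auto simp: strict_mono_on_def)

lemma time_change_one:
  assumes r: "r \<in> time_changes"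
  shows "r 1 = 1"
proof -
  have "1 \<in> r ` {0..1}" using r unfolding time_changes_def by auto
  then obtain s where s: "s \<in> {0..1}" "r s = 1" by auto
  have "\<not> s < 1" using time_change_less[OF r, of s 1] time_change_range[OF r, of 1] s by auto
  then show ?thesis using s by auto
qed

lemma time_change_comp:
  assumes r1: "r1 \<in> time_changes" and r2: "r2 \<in> time_changes"
  shows "(\<lambda>t. r2 (r1 t)) \<in> time_changes"
proof -
  have "continuous_on {0..1} (\<lambda>t. r2 (r1 t))"
    using r1 r2 unfolding time_changes_def by (intro continuous_on_compose2[of "{0..1}" r2 "{0..1}" r1]) auto
  moreover have "strict_mono_on {0..1} (\<lambda>t. r2 (r1 t))"
    by (rule strict_mono_onI) (intro time_change_less[OF r2] time_change_less[OF r1] time_change_range[OF r1]; simp)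
  moreover have "(\<lambda>t. r2 (r1 t)) ` {0..1} = {0..1}"
    using r1 r2 unfolding time_changes_def by (simp add: image_image[symmetric])
  ultimately show ?thesis unfolding time_changes_def by blast
qed

lemma time_change_inverse:
  assumes r: "r \<in> time_changes"
  obtains g where "g \<in> time_changes"
    "\<And>t. t \<in> {0..1} \<Longrightarrow> r (g t) = t" "\<And>t. t \<in> {0..1} \<Longrightarrow> g (r t) = t"
proof -
  define g where "g = the_inv_into {0..1} r"
  have inj: "inj_on r {0..1}" and onto: "r ` {0..1} = {0..1}"
    using r strict_mono_on_imp_inj_on unfolding time_changes_def by blast+
  have rg: "r (g t) = t" if "t \<in> {0..1}" for t
    using f_the_inv_into_f[OF inj] that onto unfolding g_def by auto
  have gr: "g (r t) = t" if "t \<in> {0..1}" for t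
    using the_inv_into_f_f[OF inj] that unfolding g_def by auto
  have g_onto: "g ` {0..1} = {0..1}"
    using the_inv_into_onto[OF inj] onto unfolding g_def by simp
  have "continuous_on {0..1} g"
    using continuous_on_inv[of "{0..1}" r g] r gr onto unfolding time_changes_def by auto
  moreover have "strict_mono_on {0..1} g"
  proof (rule strict_mono_onI)
    fix a b :: real assume ab: "a \<in> {0..1}" "b \<in> {0..1}" "a < b"
    have "g a \<in> {0..1}" "g b \<in> {0..1}" using g_onto ab by auto
    moreover have "g a \<noteq> g b" using rg ab by (metis less_irrefl)
    moreover have "\<not> g b < g a"
      using time_change_less[OF r, of "g b" "g a"] rg[of a] rg[of b] ab \<open>g a \<in> {0..1}\<close> \<open>g b \<in> {0..1}\<close>
      by linarith
    ultimately show "g a < g b" by linarith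
  qed
  ultimately have "g \<in> time_changes" using g_onto unfolding time_changes_def by blast
  then show ?thesis using that rg gr by blast
qed

definition skorohod_cost :: "(real \<Rightarrow> real) \<Rightarrow> (real \<Rightarrow> real) \<Rightarrow> (real \<Rightarrow> real) \<Rightarrow> real" where
  "skorohod_cost x y r = max (SUP t\<in>{0..1}. \<bar>r t - t\<bar>) (SUP t\<in>{0..1}. \<bar>x t - y (r t)\<bar>)"

lemma skorohod_dist_eq_Inf: "skorohod_dist x y = Inf (skorohod_cost x y ` time_changes)"
  unfolding skorohod_dist_def skorohod_cost_def by (simp add: Setcompr_eq_image)

lemma bdd_above_time_change_displacement:
  "r \<in> time_changes \<Longrightarrow> bdd_above ((\<lambda>t. \<bar>r t - t\<bar>) ` {0..1})"
  by (rule bdd_aboveI2[where M=2]) (use time_change_range in fastforce)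

lemma skorohod_cost_nonneg:
  assumes "r \<in> time_changes"
  shows "0 \<le> skorohod_cost x y r"
proof -
  have "\<bar>r 0 - 0\<bar> \<le> (SUP t\<in>{0..1}. \<bar>r t - t\<bar>)"
    by (rule cSUP_upper[OF _ bdd_above_time_change_displacement[OF assms]]) auto
  then show ?thesis unfolding skorohod_cost_def by linarith
qed

lemma skorohod_dist_nonneg: "0 \<le> skorohod_dist x y"
  unfolding skorohod_dist_eq_Inf using id_time_change
  by (intro cInf_greatest) (auto intro: skorohod_cost_nonneg)

lemma skorohod_dist_le_cost: "r \<in> time_changes \<Longrightarrow> skorohod_dist x y \<le> skorohod_cost x y r"
  unfolding skorohod_dist_eq_Inf
  by (rule cInf_lower) (auto intro!: bdd_belowI2[where m=0] skorohod_cost_nonneg)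

lemma skorohod_dist_less_imp_cost_less:
  "skorohod_dist x y < e \<Longrightarrow> \<exists>r\<in>time_changes. skorohod_cost x y r < e"
  unfolding skorohod_dist_eq_Inf using cInf_lessD[of "skorohod_cost x y ` time_changes" e] id_time_change
  by blast

lemma skorohod_cost_upper:
  assumes "\<And>t. t \<in> {0..1} \<Longrightarrow> \<bar>r t - t\<bar> \<le> e" "\<And>t. t \<in> {0..1} \<Longrightarrow> \<bar>x t - y (r t)\<bar> \<le> e"
  shows "skorohod_cost x y r \<le> e"
  unfolding skorohod_cost_def using assms by (intro max.boundedI cSUP_least) auto

lemma skorohod_cost_swap:
  assumes r: "r \<in> time_changes"
  obtains g where "g \<in> time_changes" "skorohod_cost y x g = skorohod_cost x y r"
proof -
  obtain g where g: "g \<in> time_changes"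
    "\<And>t. t \<in> {0..1} \<Longrightarrow> r (g t) = t" "\<And>t. t \<in> {0..1} \<Longrightarrow> g (r t) = t"
    using time_change_inverse[OF r] by metis
  have reparam: "f ` {0..1} = (\<lambda>t. f (r t)) ` {0..1}" for f :: "real \<Rightarrow> real"
  proof -
    have "f ` {0..1} = f ` r ` {0..1}" using r unfolding time_changes_def by simp
    then show ?thesis by (simp only: image_image)
  qed
  have "(\<lambda>t. \<bar>g t - t\<bar>) ` {0..1} = (\<lambda>t. \<bar>g (r t) - r t\<bar>) ` {0..1}"
    using reparam[of "\<lambda>t. \<bar>g t - t\<bar>"] .
  also have "\<dots> = (\<lambda>t. \<bar>r t - t\<bar>) ` {0..1}"
    by (intro image_cong refl) (simp add: g(3) abs_minus_commute)
  finally have 1: "(\<lambda>t. \<bar>g t - t\<bar>) ` {0..1} = (\<lambda>t. \<bar>r t - t\<bar>) ` {0..1}" .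
  have "(\<lambda>t. \<bar>y t - x (g t)\<bar>) ` {0..1} = (\<lambda>t. \<bar>y (r t) - x (g (r t))\<bar>) ` {0..1}"
    using reparam[of "\<lambda>t. \<bar>y t - x (g t)\<bar>"] .
  also have "\<dots> = (\<lambda>t. \<bar>x t - y (r t)\<bar>) ` {0..1}"
    by (intro image_cong refl) (simp add: g(3) abs_minus_commute)
  finally have 2: "(\<lambda>t. \<bar>y t - x (g t)\<bar>) ` {0..1} = (\<lambda>t. \<bar>x t - y (r t)\<bar>) ` {0..1}" .
  show ?thesis
    using that[OF g(1)] unfolding skorohod_cost_def 1 2 by blast
qed

lemma skorohod_dist_commute: "skorohod_dist x y = skorohod_dist y x"
proof -
  have "skorohod_cost x y ` time_changes \<subseteq> skorohod_cost y x ` time_changes" for x y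
  proof
    fix v assume "v \<in> skorohod_cost x y ` time_changes"
    then obtain r where r: "r \<in> time_changes" and v: "v = skorohod_cost x y r" by blast
    obtain g where "g \<in> time_changes" "skorohod_cost y x g = v"
      using skorohod_cost_swap[OF r] unfolding v by blast
    then show "v \<in> skorohod_cost y x ` time_changes" by blast
  qed
  then have "skorohod_cost x y ` time_changes = skorohod_cost y x ` time_changes"
    by (intro subset_antisym)
  then show ?thesis unfolding skorohod_dist_eq_Inf by simp
qed

lemma cadlag_extensional: "s \<in> cadlag \<Longrightarrow> s \<in> extensional {0..1}"
  unfolding cadlag_def by simp

lemma cadlag_right_continuous: "s \<in> cadlag \<Longrightarrow> t \<in> {0..<1} \<Longrightarrow> (s \<longlongrightarrow> s t) (at_right t)"
  unfolding cadlag_def by simp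

lemma cadlag_left_limit: "s \<in> cadlag \<Longrightarrow> t \<in> {0<..1} \<Longrightarrow> \<exists>l. (s \<longlongrightarrow> l) (at_left t)"
  unfolding cadlag_def by simp

lemma cadlag_locally_bounded:
  assumes x: "x \<in> cadlag" and t: "t \<in> {0..1}"
  shows "\<exists>d>0. \<exists>B. \<forall>u\<in>{0..1}. \<bar>u - t\<bar> < d \<longrightarrow> \<bar>x u\<bar> \<le> B"
proof -
  have bounded_near: "eventually (\<lambda>u. \<bar>x u\<bar> \<le> \<bar>l\<bar> + 1) F" if "(x \<longlongrightarrow> l) F" for l F
    using tendstoD[OF that, of 1] by (rule eventually_mono) (auto simp: dist_real_def)
  obtain b1 B1 where b1: "t < b1" "\<And>u. t < u \<Longrightarrow> u < b1 \<Longrightarrow> u \<le> 1 \<Longrightarrow> \<bar>x u\<bar> \<le> B1"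
  proof (cases "t < 1")
    case True
    then have "(x \<longlongrightarrow> x t) (at_right t)" using t by (intro cadlag_right_continuous[OF x]) simp
    note bounded_near[OF this]
    then obtain b where "t < b" "\<And>u. t < u \<Longrightarrow> u < b \<Longrightarrow> \<bar>x u\<bar> \<le> \<bar>x t\<bar> + 1"
      unfolding eventually_at_right_field by blast
    then show ?thesis by (rule that) auto
  qed (use t in \<open>auto intro: that[of 2]\<close>)
  obtain b0 B0 where b0: "b0 < t" "\<And>u. b0 < u \<Longrightarrow> u < t \<Longrightarrow> 0 \<le> u \<Longrightarrow> \<bar>x u\<bar> \<le> B0"
  proof (cases "0 < t")
    case True
    then have "t \<in> {0<..1}" using t by simp
    then obtain l where "(x \<longlongrightarrow> l) (at_left t)" using cadlag_left_limit[OF x] by blast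
    note bounded_near[OF this]
    then obtain b where "b < t" "\<And>u. b < u \<Longrightarrow> u < t \<Longrightarrow> \<bar>x u\<bar> \<le> \<bar>l\<bar> + 1"
      unfolding eventually_at_left_field by blast
    then show ?thesis by (rule that) auto
  qed (use t in \<open>auto intro: that[of "-1"]\<close>)
  have "\<bar>x u\<bar> \<le> max \<bar>x t\<bar> (max B0 B1)" if "u \<in> {0..1}" "\<bar>u - t\<bar> < min (b1 - t) (t - b0)" for u
  proof -
    consider "u < t" | "u = t" | "t < u" by linarith
    then show ?thesis using b0(2)[of u] b1(2)[of u] that by cases auto
  qed
  moreover have "0 < min (b1 - t) (t - b0)" using b0 b1 by simp
  ultimately show ?thesis by blast
qed

lemma cadlag_bounded:
  assumes x: "x \<in> cadlag"
  obtains B where "\<And>t. t \<in> {0..1} \<Longrightarrow> \<bar>x t\<bar> \<le> B"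
proof -
  obtain d B where dB: "\<And>t. t \<in> {0..1} \<Longrightarrow> d t > 0 \<and> (\<forall>u\<in>{0..1}. \<bar>u - t\<bar> < d t \<longrightarrow> \<bar>x u\<bar> \<le> B t)"
    using cadlag_locally_bounded[OF x] by metis
  have cover: "{0..1::real} \<subseteq> (\<Union>t\<in>{0..1}. ball t (d t))"
    using dB by force
  obtain K where K: "K \<subseteq> {0..1}" "finite K" "{0..1::real} \<subseteq> (\<Union>t\<in>K. ball t (d t))"
    by (rule compactE_image[OF compact_Icc _ cover]) auto
  show ?thesis
  proof (rule that)
    fix u :: real assume u: "u \<in> {0..1}"
    then obtain t where t: "t \<in> K" "u \<in> ball t (d t)" using K by blast
    then have "\<bar>x u\<bar> \<le> B t" using dB[of t] K u by (auto simp: dist_real_def abs_minus_commute)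
    also have "\<dots> \<le> \<bar>B t\<bar>" by simp
    also have "\<dots> \<le> (\<Sum>t\<in>K. \<bar>B t\<bar>)" using t K by (intro member_le_sum) auto
    finally show "\<bar>x u\<bar> \<le> (\<Sum>t\<in>K. \<bar>B t\<bar>)" .
  qed
qed

lemma skorohod_cost_lower:
  assumes x: "x \<in> cadlag" and y: "y \<in> cadlag" and r: "r \<in> time_changes" and t: "t \<in> {0..1}"
  shows "\<bar>r t - t\<bar> \<le> skorohod_cost x y r" "\<bar>x t - y (r t)\<bar> \<le> skorohod_cost x y r"
proof -
  obtain Bx By where Bx: "\<And>t. t \<in> {0..1} \<Longrightarrow> \<bar>x t\<bar> \<le> Bx" and By: "\<And>t. t \<in> {0..1} \<Longrightarrow> \<bar>y t\<bar> \<le> By"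
    using cadlag_bounded[OF x] cadlag_bounded[OF y] by metis
  have "bdd_above ((\<lambda>t. \<bar>x t - y (r t)\<bar>) ` {0..1})"
  proof (rule bdd_aboveI2)
    fix t :: real assume "t \<in> {0..1}"
    then show "\<bar>x t - y (r t)\<bar> \<le> Bx + By"
      using Bx[of t] By[of "r t"] time_change_range[OF r] by fastforce
  qed
  then show "\<bar>x t - y (r t)\<bar> \<le> skorohod_cost x y r"
    using cSUP_upper[OF t] unfolding skorohod_cost_def by fastforce
  show "\<bar>r t - t\<bar> \<le> skorohod_cost x y r"
    using cSUP_upper[OF t bdd_above_time_change_displacement[OF r]] unfolding skorohod_cost_def by linarith
qed

lemma skorohod_dist_lessE:
  assumes x: "x \<in> cadlag" and y: "y \<in> cadlag" and d: "skorohod_dist x y < e"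
  obtains r where "r \<in> time_changes"
    "\<And>t. t \<in> {0..1} \<Longrightarrow> \<bar>r t - t\<bar> < e" "\<And>t. t \<in> {0..1} \<Longrightarrow> \<bar>x t - y (r t)\<bar> < e"
proof -
  obtain r where r: "r \<in> time_changes" "skorohod_cost x y r < e"
    using skorohod_dist_less_imp_cost_less[OF d] by blast
  show ?thesis
    using that[OF r(1)] skorohod_cost_lower[OF x y r(1)] r(2) by fastforce
qed

lemma skorohod_dist_zero_imp_eq_at:
  assumes x: "x \<in> cadlag" and y: "y \<in> cadlag" and d: "skorohod_dist x y = 0"
    and t: "t \<in> {0..<1}"
  shows "x t = y t"
proof (rule ccontr)
  assume "x t \<noteq> y t"
  define \<eta> where "\<eta> = \<bar>x t - y t\<bar> / 4"
  have \<eta>: "\<eta> > 0" using \<open>x t \<noteq> y t\<close> unfolding \<eta>_def by auto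
  have "(x \<longlongrightarrow> x t) (at_right t)" "(y \<longlongrightarrow> y t) (at_right t)"
    using t by (simp_all add: cadlag_right_continuous[OF x] cadlag_right_continuous[OF y])
  then have "eventually (\<lambda>u. dist (x u) (x t) < \<eta> \<and> dist (y u) (y t) < \<eta>) (at_right t)"
    by (intro eventually_conj tendstoD \<eta>)
  then obtain b where b: "t < b" "\<And>u. t < u \<Longrightarrow> u < b \<Longrightarrow> \<bar>x u - x t\<bar> < \<eta> \<and> \<bar>y u - y t\<bar> < \<eta>"
    unfolding eventually_at_right_field dist_real_def by blast
  define c where "c = min b 1"
  have c: "t < c" "c \<le> 1" "c \<le> b" using b t unfolding c_def by auto
  \<comment> \<open>moving the midpoint \<open>u\<close> of \<open>(t, c)\<close> by less than \<open>(c - t)/2\<close> keeps it in \<open>(t, b)\<close>\<close>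
  define u where "u = (t + c) / 2"
  have u: "u \<in> {0..1}" using c t unfolding u_def by auto
  have close: "skorohod_dist x y < min ((c - t) / 2) \<eta>" using d c \<eta> by simp
  obtain r where r: "\<And>s. s \<in> {0..1} \<Longrightarrow> \<bar>r s - s\<bar> < min ((c - t) / 2) \<eta>"
    "\<And>s. s \<in> {0..1} \<Longrightarrow> \<bar>x s - y (r s)\<bar> < min ((c - t) / 2) \<eta>"
    using skorohod_dist_lessE[OF x y close] by metis
  have "\<bar>r u - u\<bar> < (c - t) / 2" using r(1)[OF u] by linarith
  then have "t < r u" "r u < b" "t < u" "u < b" using c unfolding u_def by (auto simp: abs_less_iff field_simps)
  then have "\<bar>x u - x t\<bar> < \<eta>" "\<bar>y (r u) - y t\<bar> < \<eta>" using b(2) by blast+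
  then have "\<bar>x t - y t\<bar> < 3 * \<eta>" using r(2)[OF u] by linarith
  then show False unfolding \<eta>_def by simp
qed

lemma skorohod_dist_eq_0_iff:
  assumes x: "x \<in> cadlag" and y: "y \<in> cadlag"
  shows "skorohod_dist x y = 0 \<longleftrightarrow> x = y"
proof
  assume d: "skorohod_dist x y = 0"
  show "x = y"
  proof
    fix t :: real
    consider "t \<in> {0..<1}" | "t = 1" | "t \<notin> {0..1}" by fastforce
    then show "x t = y t"
    proof cases
      case 1
      then show ?thesis by (rule skorohod_dist_zero_imp_eq_at[OF x y d])
    next
      case 2
      have close: "\<bar>x 1 - y 1\<bar> < e" if "e > 0" for e
      proof -
        have "skorohod_dist x y < e" using d that by simp
        then obtain r where r: "r \<in> time_changes" "\<And>s. s \<in> {0..1} \<Longrightarrow> \<bar>x s - y (r s)\<bar> < e"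
          using skorohod_dist_lessE[OF x y] by metis
        show ?thesis using r(2)[of 1] time_change_one[OF r(1)] by simp
      qed
      show ?thesis
      proof (rule ccontr)
        assume "x t \<noteq> y t"
        then show False using close[of "\<bar>x 1 - y 1\<bar>"] 2 by simp
      qed
    next
      case 3
      then show ?thesis using x y cadlag_extensional extensional_arb by metis
    qed
  qed
next
  assume "x = y"
  then show "skorohod_dist x y = 0"
    using skorohod_dist_le_cost[OF id_time_change, of x x] skorohod_dist_nonneg[of x x]
    by (simp add: skorohod_cost_def)
qed

lemma skorohod_dist_triangle:
  assumes x: "x \<in> cadlag" and y: "y \<in> cadlag" and z: "z \<in> cadlag"
  shows "skorohod_dist x z \<le> skorohod_dist x y + skorohod_dist y z"
proof (rule field_le_epsilon)
  fix e :: real assume e: "e > 0"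
  obtain r1 where r1: "r1 \<in> time_changes" "skorohod_cost x y r1 < skorohod_dist x y + e/2"
    using skorohod_dist_less_imp_cost_less[of x y "skorohod_dist x y + e/2"] e by auto
  obtain r2 where r2: "r2 \<in> time_changes" "skorohod_cost y z r2 < skorohod_dist y z + e/2"
    using skorohod_dist_less_imp_cost_less[of y z "skorohod_dist y z + e/2"] e by auto
  have "skorohod_cost x z (\<lambda>t. r2 (r1 t)) \<le> skorohod_cost x y r1 + skorohod_cost y z r2"
  proof (rule skorohod_cost_upper)
    fix t :: real assume t: "t \<in> {0..1}"
    have t1: "r1 t \<in> {0..1}" by (rule time_change_range[OF r1(1) t])
    show "\<bar>r2 (r1 t) - t\<bar> \<le> skorohod_cost x y r1 + skorohod_cost y z r2"
      using skorohod_cost_lower(1)[OF x y r1(1) t] skorohod_cost_lower(1)[OF y z r2(1) t1] by linarith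
    show "\<bar>x t - z (r2 (r1 t))\<bar> \<le> skorohod_cost x y r1 + skorohod_cost y z r2"
      using skorohod_cost_lower(2)[OF x y r1(1) t] skorohod_cost_lower(2)[OF y z r2(1) t1] by linarith
  qed
  moreover have "skorohod_dist x z \<le> skorohod_cost x z (\<lambda>t. r2 (r1 t))"
    by (rule skorohod_dist_le_cost[OF time_change_comp[OF r1(1) r2(1)]])
  ultimately show "skorohod_dist x z \<le> skorohod_dist x y + skorohod_dist y z + e"
    using r1(2) r2(2) by linarith
qed

lemma Metric_space_skorohod: "Metric_space cadlag skorohod_dist"
proof
  show "0 \<le> skorohod_dist x y" for x y
    by (rule skorohod_dist_nonneg)
  show "skorohod_dist x y = skorohod_dist y x" for x y
    by (rule skorohod_dist_commute)
  show "skorohod_dist x y = 0 \<longleftrightarrow> x = y" if "x \<in> cadlag" "y \<in> cadlag" for x y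
    using that by (rule skorohod_dist_eq_0_iff)
  show "skorohod_dist x z \<le> skorohod_dist x y + skorohod_dist y z"
    if "x \<in> cadlag" "y \<in> cadlag" "z \<in> cadlag" for x y z
    using that by (rule skorohod_dist_triangle)
qed

lemma openin_skorohod_topology:
  "openin skorohod_topology U \<longleftrightarrow>
     U \<subseteq> cadlag \<and> (\<forall>x\<in>U. \<exists>e>0. Metric_space.mball cadlag skorohod_dist x e \<subseteq> U)"
  unfolding skorohod_topology_def Metric_space.openin_mtopology[OF Metric_space_skorohod] by blast

lemma mem_mball_skorohod:
  "y \<in> Metric_space.mball cadlag skorohod_dist x e \<longleftrightarrow> x \<in> cadlag \<and> y \<in> cadlag \<and> skorohod_dist x y < e"
  by (rule Metric_space.in_mball[OF Metric_space_skorohod])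

lemma topspace_skorohod_topology [simp]: "topspace skorohod_topology = cadlag"
  unfolding skorohod_topology_def by (rule Metric_space.topspace_mtopology[OF Metric_space_skorohod])

section \<open>Point evaluations on the Skorohod space\<close>

definition cadlag_exceeding :: "real \<Rightarrow> real \<Rightarrow> real \<Rightarrow> (real \<Rightarrow> real) set" where
  "cadlag_exceeding a b c = {x \<in> cadlag. \<exists>u\<in>{0..1}. a < u \<and> u < b \<and> c < x u}"

lemma openin_cadlag_exceeding: "openin skorohod_topology (cadlag_exceeding a b c)"
  unfolding openin_skorohod_topology
proof (intro conjI ballI)
  show "cadlag_exceeding a b c \<subseteq> cadlag" unfolding cadlag_exceeding_def by auto
  fix y assume "y \<in> cadlag_exceeding a b c"
  then obtain u where y: "y \<in> cadlag" and u: "u \<in> {0..1}" "a < u" "u < b" "c < y u"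
    unfolding cadlag_exceeding_def by blast
  define e where "e = min (y u - c) (min (u - a) (b - u))"
  have "Metric_space.mball cadlag skorohod_dist y e \<subseteq> cadlag_exceeding a b c"
  proof
    fix x assume "x \<in> Metric_space.mball cadlag skorohod_dist y e"
    then have x: "x \<in> cadlag" and d: "skorohod_dist y x < e" by (auto simp: mem_mball_skorohod)
    obtain r where r: "r \<in> time_changes"
      "\<And>t. t \<in> {0..1} \<Longrightarrow> \<bar>r t - t\<bar> < e" "\<And>t. t \<in> {0..1} \<Longrightarrow> \<bar>y t - x (r t)\<bar> < e"
      using skorohod_dist_lessE[OF y x d] by metis
    have "r u \<in> {0..1}" "a < r u" "r u < b" "c < x (r u)"
      using time_change_range[OF r(1) u(1)] r(2)[OF u(1)] r(3)[OF u(1)] unfolding e_def by auto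
    then show "x \<in> cadlag_exceeding a b c" using x unfolding cadlag_exceeding_def by blast
  qed
  moreover have "e > 0" using u unfolding e_def by auto
  ultimately show "\<exists>e>0. Metric_space.mball cadlag skorohod_dist y e \<subseteq> cadlag_exceeding a b c"
    by blast
qed

lemma cadlag_ge_iff_exceeding:
  assumes s: "s \<in> cadlag" and v: "v \<in> {0..<1}"
  shows "c \<le> s v \<longleftrightarrow> (\<forall>n. s \<in> cadlag_exceeding v (v + 1 / Suc n) (c - 1 / Suc n))"
proof -
  have near: "\<exists>b>v. \<forall>u. v < u \<longrightarrow> u < b \<longrightarrow> \<bar>s u - s v\<bar> < h" if "h > 0" for h
    using tendstoD[OF cadlag_right_continuous[OF s v] that]
    unfolding eventually_at_right_field dist_real_def by blast
  show ?thesis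
  proof (intro iffI allI)
    fix n assume c: "c \<le> s v"
    define h where "h = 1 / real (Suc n)"
    have h: "h > 0" unfolding h_def by simp
    obtain b where b: "v < b" "\<And>u. v < u \<Longrightarrow> u < b \<Longrightarrow> \<bar>s u - s v\<bar> < h"
      using near[OF h] by blast
    obtain u where u: "v < u" "u < min b (min 1 (v + h))"
      using dense[of v "min b (min 1 (v + h))"] b(1) v h by auto
    have "c - h < s u" using b(2)[of u] u c by auto
    then show "s \<in> cadlag_exceeding v (v + 1 / Suc n) (c - 1 / Suc n)"
      using s u v unfolding cadlag_exceeding_def h_def by auto
  next
    assume exceeding: "\<forall>n. s \<in> cadlag_exceeding v (v + 1 / Suc n) (c - 1 / Suc n)"
    show "c \<le> s v"
    proof (rule ccontr)
      assume "\<not> c \<le> s v"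
      define \<delta> where "\<delta> = (c - s v) / 2"
      have \<delta>: "\<delta> > 0" using \<open>\<not> c \<le> s v\<close> unfolding \<delta>_def by simp
      obtain b where b: "v < b" "\<And>u. v < u \<Longrightarrow> u < b \<Longrightarrow> \<bar>s u - s v\<bar> < \<delta>"
        using near[OF \<delta>] by blast
      obtain n where n: "1 / real (Suc n) < min (b - v) \<delta>"
        using nat_approx_posE[of "min (b - v) \<delta>"] b(1) \<delta> by auto
      obtain u where u: "v < u" "u < v + 1 / Suc n" "c - 1 / Suc n < s u"
        using exceeding unfolding cadlag_exceeding_def by blast
      have "u < b" using u(2) n by linarith
      then have "s u < s v + \<delta>" using b(2)[of u] u(1) by (simp add: abs_less_iff)
      moreover have "1 / real (Suc n) < \<delta>" using n by linarith
      ultimately show False using u(3) unfolding \<delta>_def by argo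
    qed
  qed
qed

lemma measurable_cadlag_eval:
  assumes v: "v < 1"
  shows "(\<lambda>s. s v) \<in> borel_of_top skorohod_topology \<rightarrow>\<^sub>M borel"
proof (cases "0 \<le> v")
  case True
  then have v01: "v \<in> {0..<1}" using v by simp
  show ?thesis
  proof (rule borel_measurableI_ge)
    fix c :: real
    have "{s \<in> space (borel_of_top skorohod_topology). c \<le> s v}
        = (\<Inter>n. cadlag_exceeding v (v + 1 / Suc n) (c - 1 / Suc n))"
    proof (intro equalityI subsetI)
      fix s assume "s \<in> {s \<in> space (borel_of_top skorohod_topology). c \<le> s v}"
      then show "s \<in> (\<Inter>n. cadlag_exceeding v (v + 1 / Suc n) (c - 1 / Suc n))"
        using cadlag_ge_iff_exceeding[OF _ v01, of s c] by simp
    next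
      fix s assume s: "s \<in> (\<Inter>n. cadlag_exceeding v (v + 1 / Suc n) (c - 1 / Suc n))"
      then have "s \<in> cadlag" unfolding cadlag_exceeding_def by blast
      then show "s \<in> {s \<in> space (borel_of_top skorohod_topology). c \<le> s v}"
        using s cadlag_ge_iff_exceeding[OF _ v01, of s c] by simp
    qed
    also have "\<dots> \<in> sets (borel_of_top skorohod_topology)"
      using openin_imp_sets_borel_of_top[OF openin_cadlag_exceeding] by (intro sets.countable_INT) auto
    finally show "{s \<in> space (borel_of_top skorohod_topology). c \<le> s v} \<in> sets (borel_of_top skorohod_topology)" .
  qed
next
  case False
  have "s v = undefined" if "s \<in> space (borel_of_top skorohod_topology)" for s
  proof (rule extensional_arb[of s])
    show "s \<in> extensional {0..1}" using that by (simp add: cadlag_extensional)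
    show "v \<notin> {0..1}" using False by simp
  qed
  then have "(\<lambda>s. s v) \<in> borel_of_top skorohod_topology \<rightarrow>\<^sub>M borel \<longleftrightarrow>
      (\<lambda>s. undefined) \<in> borel_of_top skorohod_topology \<rightarrow>\<^sub>M (borel :: real measure)"
    by (rule measurable_cong)
  then show ?thesis by simp
qed

section \<open>Grid approximations\<close>

lemma space_Leb01 [simp]: "space Leb01 = {0..1}"
  by (simp add: Leb01_def space_restrict_space)

lemma measurable_ident_Leb01 [measurable]: "(\<lambda>t::real. t) \<in> Leb01 \<rightarrow>\<^sub>M borel"
  by (simp add: Leb01_def measurable_restrict_space1)

lemma measurable_grid_compose:
  fixes F :: "'a \<Rightarrow> real \<Rightarrow> real" and c :: "int \<Rightarrow> real" and f :: "'b \<Rightarrow> real"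
  assumes F: "\<And>k. (\<lambda>x. F x (c k)) \<in> M \<rightarrow>\<^sub>M borel" and f: "f \<in> N \<rightarrow>\<^sub>M borel"
  shows "(\<lambda>p. F (fst p) (c \<lfloor>f (snd p)\<rfloor>)) \<in> M \<Otimes>\<^sub>M N \<rightarrow>\<^sub>M borel"
proof (rule measurable_compose_countable[where f = "\<lambda>k p. F (fst p) (c k)"])
  show "(\<lambda>p. F (fst p) (c k)) \<in> M \<Otimes>\<^sub>M N \<rightarrow>\<^sub>M borel" for k
    by (rule measurable_compose[OF measurable_fst F])
  show "(\<lambda>p. \<lfloor>f (snd p)\<rfloor>) \<in> M \<Otimes>\<^sub>M N \<rightarrow>\<^sub>M count_space UNIV"
    by (rule measurable_compose[OF measurable_compose[OF measurable_snd f] measurable_real_floor])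
qed

text \<open>The cap \<open>1 - 1/(m + 2)\<close> keeps the grid points below \<open>1\<close>, where point evaluations are
  measurable on the Skorohod space.\<close>
definition grid_above :: "nat \<Rightarrow> real \<Rightarrow> real" where
  "grid_above m t = min ((real_of_int \<lfloor>real (Suc m) * t\<rfloor> + 1) / real (Suc m)) (1 - 1 / (real m + 2))"

definition grid_below :: "nat \<Rightarrow> real \<Rightarrow> real" where
  "grid_below m t = \<lfloor>real (Suc m) * t\<rfloor> / real (Suc m)"

lemma floor_divide_bounds:
  fixes t n :: real
  assumes n: "n > 0"
  shows "\<lfloor>n * t\<rfloor> / n \<le> t" "t < \<lfloor>n * t\<rfloor> / n + 1 / n"
proof -
  show "\<lfloor>n * t\<rfloor> / n \<le> t"
    using of_int_floor_le[of "n * t"] n by (simp add: divide_le_eq mult.commute)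
  have "t < (\<lfloor>n * t\<rfloor> + 1) / n"
    using real_of_int_floor_add_one_gt[of "n * t"] n by (simp add: less_divide_eq mult.commute)
  then show "t < \<lfloor>n * t\<rfloor> / n + 1 / n" by (simp add: add_divide_distrib)
qed

lemma grid_above_tendsto:
  assumes t: "t \<in> {0..<1}"
  shows "filterlim (\<lambda>m. grid_above m t) (at_right t) sequentially"
proof -
  have upper: "grid_above m t \<le> t + 1 / real (Suc m)" for m
    using floor_divide_bounds(1)[of "real (Suc m)" t] unfolding grid_above_def add_divide_distrib
    by linarith
  have "t < (real_of_int \<lfloor>real (Suc m) * t\<rfloor> + 1) / real (Suc m)" for m
    using floor_divide_bounds(2)[of "real (Suc m)" t] unfolding add_divide_distrib by simp
  moreover have "eventually (\<lambda>m. t < 1 - 1 / (real m + 2)) sequentially"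
  proof -
    have "(\<lambda>m. 1 - 1 / (real m + 2)) \<longlonglongrightarrow> 1" by real_asymp
    then show ?thesis using t by (intro order_tendstoD(1)) auto
  qed
  ultimately have above: "eventually (\<lambda>m. t < grid_above m t) sequentially"
    by (auto simp: grid_above_def elim: eventually_mono)
  have "(\<lambda>m. grid_above m t) \<longlonglongrightarrow> t"
  proof (rule tendsto_sandwich[OF _ _ tendsto_const])
    show "eventually (\<lambda>m. t \<le> grid_above m t) sequentially"
      using above by (rule eventually_mono) simp
    show "eventually (\<lambda>m. grid_above m t \<le> t + 1 / real (Suc m)) sequentially"
      using upper by simp
    show "(\<lambda>m. t + 1 / real (Suc m)) \<longlonglongrightarrow> t" by real_asymp
  qed
  then show ?thesis unfolding filterlim_at using above by (auto elim: eventually_mono)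
qed

lemma grid_below_tendsto: "(\<lambda>m. grid_below m t) \<longlonglongrightarrow> t"
proof (rule tendsto_sandwich[OF _ _ _ tendsto_const])
  have "t - 1 / real (Suc m) \<le> grid_below m t" "grid_below m t \<le> t" for m
    using floor_divide_bounds[of "real (Suc m)" t] unfolding grid_below_def by simp_all
  then show "eventually (\<lambda>m. t - 1 / real (Suc m) \<le> grid_below m t) sequentially"
    "eventually (\<lambda>m. grid_below m t \<le> t) sequentially" by simp_all
  show "(\<lambda>m. t - 1 / real (Suc m)) \<longlonglongrightarrow> t" by real_asymp
qed

definition grid_right_lim :: "(real \<Rightarrow> real) \<Rightarrow> real \<Rightarrow> real" where
  "grid_right_lim s t = lim (\<lambda>m. s (grid_above m t))"

lemma measurable_grid_right_lim:
  "(\<lambda>p. grid_right_lim (fst p) (snd p)) \<in> borel_of_top skorohod_topology \<Otimes>\<^sub>M Leb01 \<rightarrow>\<^sub>M borel"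
  unfolding grid_right_lim_def
proof (rule borel_measurable_lim_metric)
  fix m
  let ?c = "\<lambda>k::int. min ((real_of_int k + 1) / real (Suc m)) (1 - 1 / (real m + 2))"
  have "(\<lambda>s. s (?c k)) \<in> borel_of_top skorohod_topology \<rightarrow>\<^sub>M borel" for k
    by (rule measurable_cadlag_eval) (simp add: min.strict_coboundedI2)
  moreover have "(\<lambda>t. real (Suc m) * t) \<in> Leb01 \<rightarrow>\<^sub>M borel" by measurable
  ultimately have "(\<lambda>p. fst p (?c \<lfloor>real (Suc m) * snd p\<rfloor>))
      \<in> borel_of_top skorohod_topology \<Otimes>\<^sub>M Leb01 \<rightarrow>\<^sub>M borel"
    by (rule measurable_grid_compose[where F = "\<lambda>s u. s u"])
  then show "(\<lambda>p. fst p (grid_above m (snd p))) \<in> borel_of_top skorohod_topology \<Otimes>\<^sub>M Leb01 \<rightarrow>\<^sub>M borel"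
    unfolding grid_above_def .
qed

lemma grid_right_lim_cadlag:
  assumes s: "s \<in> cadlag" and t: "t \<in> {0..<1}"
  shows "grid_right_lim s t = s t"
  unfolding grid_right_lim_def
  by (rule limI filterlim_compose[OF cadlag_right_continuous[OF s t] grid_above_tendsto[OF t]])+

lemma measurable_cadlag_Leb01:
  assumes s: "s \<in> cadlag"
  shows "s \<in> Leb01 \<rightarrow>\<^sub>M borel"
proof -
  have "(\<lambda>t. grid_right_lim s t) \<in> Leb01 \<rightarrow>\<^sub>M borel"
    using measurable_Pair2[OF measurable_grid_right_lim, of s] s by simp
  moreover have "{1::real} \<in> sets Leb01"
    unfolding Leb01_def by (subst sets_restrict_space_iff) auto
  moreover have "{t \<in> space Leb01. t = 1} = {1}" by auto
  ultimately have m: "(\<lambda>t. if t = 1 then s 1 else grid_right_lim s t) \<in> Leb01 \<rightarrow>\<^sub>M borel"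
    by (intro measurable_If) auto
  have eq: "(if t = 1 then s 1 else grid_right_lim s t) = s t" if "t \<in> space Leb01" for t
    using that grid_right_lim_cadlag[OF s, of t] by auto
  show ?thesis using measurable_cong[THEN iffD1, OF eq m] by simp
qed

section \<open>The weak topology of \<open>L\<^sup>p\<close> and local averages\<close>

lemma finite_measure_Leb01: "finite_measure Leb01"
proof
  have "emeasure Leb01 (space Leb01) = emeasure lborel {0..1::real}"
    unfolding Leb01_def by (simp add: emeasure_restrict_space space_restrict_space)
  then show "emeasure Leb01 (space Leb01) \<noteq> \<infinity>" by simp
qed

lemma topspace_weak_Lp_topology [simp]: "topspace (weak_Lp_topology p) = Lp01 p"
proof -
  have "Lp01 p = {f \<in> Lp01 p. (\<integral>t. f t * 0 \<partial>Leb01) \<in> UNIV}" by simp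
  moreover have "(\<lambda>t. 0) \<in> Lp01 (p / (p - 1))" unfolding Lp01_def by simp
  ultimately have "Lp01 p \<in> {{f \<in> Lp01 p. (\<integral>t. f t * g t \<partial>Leb01) \<in> U} | g U.
      g \<in> Lp01 (p / (p - 1)) \<and> open U}" by blast
  then show ?thesis unfolding weak_Lp_topology_def topology_generated_by_topspace by blast
qed

lemma measurable_weak_Lp_pairing:
  assumes g: "g \<in> Lp01 (p / (p - 1))"
  shows "(\<lambda>f. \<integral>t. f t * g t \<partial>Leb01) \<in> borel_of_top (weak_Lp_topology p) \<rightarrow>\<^sub>M borel"
proof -
  have "openin (weak_Lp_topology p) {f \<in> Lp01 p. (\<integral>t. f t * g t \<partial>Leb01) \<in> U}" if "open U" for U
    unfolding weak_Lp_topology_def using g that by (intro topology_generated_by_Basis) blast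
  then have "continuous_map (weak_Lp_topology p) euclidean (\<lambda>f. \<integral>t. f t * g t \<partial>Leb01)"
    by (simp add: continuous_map_def)
  from measurable_borel_of_top_continuous_map[OF this] show ?thesis
    by (simp add: borel_of_top_euclidean)
qed

lemma indicator_in_Lp01:
  assumes q: "q > 0"
  shows "indicator {a..b} \<in> Lp01 q"
proof -
  have m: "(indicator {a..b} :: real \<Rightarrow> real) \<in> borel_measurable Leb01"
    unfolding Leb01_def by (intro measurable_restrict_space1) simp
  have "(\<lambda>t. \<bar>indicator {a..b} t\<bar> powr q) = (indicator {a..b} :: real \<Rightarrow> real)"
    using q by (auto simp: indicator_def)
  moreover have "integrable Leb01 (indicator {a..b} :: real \<Rightarrow> real)"
    using m by (intro finite_measure.integrable_const_bound[OF finite_measure_Leb01, where B=1])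
      (auto simp: indicator_def)
  ultimately show ?thesis unfolding Lp01_def using m by simp
qed

lemma Lp01_integrable:
  assumes p: "p \<ge> 1" and f: "f \<in> Lp01 p"
  shows "integrable Leb01 f"
proof (rule Bochner_Integration.integrable_bound)
  show "f \<in> borel_measurable Leb01" using f unfolding Lp01_def by blast
  show "integrable Leb01 (\<lambda>t. 1 + \<bar>f t\<bar> powr p)"
    using f finite_measure_Leb01 unfolding Lp01_def
    by (intro Bochner_Integration.integrable_add finite_measure.integrable_const) auto
  have "norm (f t) \<le> norm (1 + \<bar>f t\<bar> powr p)" for t
  proof (cases "\<bar>f t\<bar> \<le> 1")
    case False
    then have "\<bar>f t\<bar> powr 1 \<le> \<bar>f t\<bar> powr p" using p by (intro powr_mono) auto
    then show ?thesis by simp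
  qed (simp add: add_increasing2)
  then show "AE t in Leb01. norm (f t) \<le> norm (1 + \<bar>f t\<bar> powr p)" by simp
qed

definition zero_extension :: "(real \<Rightarrow> real) \<Rightarrow> real \<Rightarrow> real" where
  "zero_extension f u = indicator {0..1} u * f u"

lemma integrable_zero_extension:
  assumes f: "integrable Leb01 f"
  shows "integrable lborel (zero_extension f)"
proof -
  have "integrable lborel (\<lambda>u. indicator {0..1} u *\<^sub>R f u)"
    using f unfolding Leb01_def by (subst integrable_restrict_space[symmetric]) auto
  then show ?thesis unfolding zero_extension_def by simp
qed

lemma integral_times_indicator_Leb01:
  assumes f: "integrable Leb01 f"
  shows "(\<integral>t. f t * indicator {a..b} t \<partial>Leb01) = integral {a..b} (zero_extension f)"
proof -
  have "(\<integral>t. f t * indicator {a..b} t \<partial>Leb01)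
      = (\<integral>t. indicator {0..1} t *\<^sub>R (f t * indicator {a..b} t) \<partial>lborel)"
    unfolding Leb01_def by (rule integral_restrict_space) simp
  also have "\<dots> = (\<integral>t. indicator {a..b} t *\<^sub>R zero_extension f t \<partial>lborel)"
    unfolding zero_extension_def by (rule Bochner_Integration.integral_cong) auto
  also have "\<dots> = integral {a..b} (zero_extension f)"
  proof -
    have "set_integrable lborel {a..b} (zero_extension f)"
      unfolding set_integrable_def
      by (rule integrable_mult_indicator) (auto intro: integrable_zero_extension[OF f])
    from set_borel_integral_eq_integral(2)[OF this] show ?thesis
      unfolding set_lebesgue_integral_def .
  qed
  finally show ?thesis .
qed

definition local_average :: "real \<Rightarrow> (real \<Rightarrow> real) \<Rightarrow> real \<Rightarrow> real" where
  "local_average h f t = integral {t..t + h} (zero_extension f) / h"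

lemma measurable_local_average:
  assumes p: "p > 1"
  shows "(\<lambda>f. local_average h f t) \<in> borel_of_top (weak_Lp_topology p) \<rightarrow>\<^sub>M borel"
proof -
  have "indicator {t..t + h} \<in> Lp01 (p / (p - 1))" using p by (intro indicator_in_Lp01) simp
  from measurable_weak_Lp_pairing[OF this]
  have m: "(\<lambda>f. (\<integral>u. f u * indicator {t..t + h} u \<partial>Leb01) / h) \<in> borel_of_top (weak_Lp_topology p) \<rightarrow>\<^sub>M borel"
    by measurable
  have eq: "(\<integral>u. f u * indicator {t..t + h} u \<partial>Leb01) / h = local_average h f t"
    if "f \<in> space (borel_of_top (weak_Lp_topology p))" for f
    using that p Lp01_integrable[of p f]
    by (simp add: local_average_def integral_times_indicator_Leb01)
  show ?thesis by (rule measurable_cong[THEN iffD1, OF eq m])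
qed

lemma isCont_integral_sliding_interval:
  fixes F :: "real \<Rightarrow> real"
  assumes F: "\<And>a b. F integrable_on {a..b}" and h: "h \<ge> 0"
  shows "isCont (\<lambda>t. integral {t..t + h} F) t0"
proof -
  define G where "G x = integral {t0 - 1..x} F" for x
  have G: "continuous_on {t0 - 1..t0 + 1 + h} G"
    unfolding G_def by (rule indefinite_integral_continuous_1[OF F])
  have "continuous_on {t0 - 1..t0 + 1} (\<lambda>t. G (t + h))"
  proof (rule continuous_on_compose2[OF G])
    show "continuous_on {t0 - 1..t0 + 1} (\<lambda>t. t + h)" by (intro continuous_intros)
  qed (use h in auto)
  moreover have "continuous_on {t0 - 1..t0 + 1} G"
    by (rule continuous_on_subset[OF G]) (use h in auto)
  ultimately have "continuous_on {t0 - 1..t0 + 1} (\<lambda>t. G (t + h) - G t)"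
    by (rule continuous_on_diff)
  moreover have "G (t + h) - G t = integral {t..t + h} F" if "t \<in> {t0 - 1..t0 + 1}" for t
  proof -
    have "integral {t0 - 1..t} F + integral {t..t + h} F = integral {t0 - 1..t + h} F"
      using that h by (intro Henstock_Kurzweil_Integration.integral_combine F) auto
    then show ?thesis unfolding G_def by linarith
  qed
  ultimately have "continuous_on {t0 - 1..t0 + 1} (\<lambda>t. integral {t..t + h} F)"
    by (rule continuous_on_eq)
  then show ?thesis by (rule continuous_on_interior) simp
qed

lemma lebesgue_differentiation_right:
  fixes F :: "real \<Rightarrow> real"
  assumes F: "\<And>a b. F integrable_on {a..b}"
  obtains N where "negligible N"
    "\<And>t. t \<notin> N \<Longrightarrow> (\<lambda>n. integral {t..t + 1 / Suc n} F / (1 / Suc n)) \<longlonglongrightarrow> F t"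
proof -
  obtain N where N: "negligible N"
    "\<And>x e. \<lbrakk>x \<notin> N; 0 < e\<rbrakk> \<Longrightarrow> \<exists>d>0. \<forall>h. 0 < h \<and> h < d \<longrightarrow>
       norm (integral (cbox x (x + h *\<^sub>R One)) F /\<^sub>R h ^ DIM(real) - F x) < e"
    using integrable_ccontinuous_explicit[of F] F by (metis box_real(2))
  show ?thesis
  proof (rule that[OF N(1)])
    fix t assume t: "t \<notin> N"
    show "(\<lambda>n. integral {t..t + 1 / Suc n} F / (1 / Suc n)) \<longlonglongrightarrow> F t"
    proof (rule LIMSEQ_I)
      fix e :: real assume e: "e > 0"
      obtain d where d: "d > 0" "\<And>h. 0 < h \<Longrightarrow> h < d \<Longrightarrow> \<bar>integral {t..t + h} F / h - F t\<bar> < e"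
        using N(2)[OF t e] by (auto simp: divide_inverse mult.commute)
      obtain n0 where n0: "1 / real (Suc n0) < d" using nat_approx_posE[OF d(1)] by blast
      have "\<bar>integral {t..t + 1 / Suc n} F / (1 / Suc n) - F t\<bar> < e" if "n \<ge> n0" for n
      proof (rule d(2))
        have "1 / real (Suc n) \<le> 1 / real (Suc n0)" using that by (simp add: frac_le)
        then show "1 / real (Suc n) < d" using n0 by linarith
      qed simp
      then show "\<exists>n0. \<forall>n\<ge>n0. norm (integral {t..t + 1 / Suc n} F / (1 / Suc n) - F t) < e"
        by auto
    qed
  qed
qed

text \<open>The inner limit makes the function jointly measurable in \<open>(\<phi>, t)\<close>; the outer one is
  Lebesgue differentiation.\<close>
definition grid_density :: "(real \<Rightarrow> real) \<Rightarrow> real \<Rightarrow> real" where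
  "grid_density f t = lim (\<lambda>n. lim (\<lambda>m. local_average (1 / Suc n) f (grid_below m t)))"

lemma measurable_grid_density:
  assumes p: "p > 1"
  shows "(\<lambda>q. grid_density (fst q) (snd q)) \<in> borel_of_top (weak_Lp_topology p) \<Otimes>\<^sub>M Leb01 \<rightarrow>\<^sub>M borel"
  unfolding grid_density_def
proof (intro borel_measurable_lim_metric)
  fix n m
  have "(\<lambda>t. real (Suc m) * t) \<in> Leb01 \<rightarrow>\<^sub>M borel" by measurable
  with measurable_local_average[OF p]
  have "(\<lambda>q. local_average (1 / Suc n) (fst q) ((\<lambda>k. k / real (Suc m)) \<lfloor>real (Suc m) * snd q\<rfloor>))
      \<in> borel_of_top (weak_Lp_topology p) \<Otimes>\<^sub>M Leb01 \<rightarrow>\<^sub>M borel"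
    by (rule measurable_grid_compose)
  then show "(\<lambda>q. local_average (1 / Suc n) (fst q) (grid_below m (snd q)))
      \<in> borel_of_top (weak_Lp_topology p) \<Otimes>\<^sub>M Leb01 \<rightarrow>\<^sub>M borel"
    unfolding grid_below_def by simp
qed

lemma AE_grid_density_eq:
  assumes p: "p \<ge> 1" and f: "f \<in> Lp01 p"
  shows "AE t in Leb01. grid_density f t = f t"
proof -
  have F: "integrable lborel (zero_extension f)"
    by (rule integrable_zero_extension[OF Lp01_integrable[OF p f]])
  then have F_on: "zero_extension f integrable_on {a..b}" for a b
    by (rule integrable_on_subinterval[OF integrable_on_lborel]) simp
  obtain N where N: "negligible N" "\<And>t. t \<notin> N \<Longrightarrow>
      (\<lambda>n. integral {t..t + 1 / Suc n} (zero_extension f) / (1 / Suc n)) \<longlonglongrightarrow> zero_extension f t"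
    using lebesgue_differentiation_right[OF F_on] by blast
  have recovered: "grid_density f t = f t" if t: "t \<in> {0..1}" "t \<notin> N" for t
  proof -
    have inner: "lim (\<lambda>m. local_average (1 / Suc n) f (grid_below m t)) = local_average (1 / Suc n) f t" for n
      unfolding local_average_def
      by (intro limI tendsto_divide tendsto_const isCont_tendsto_compose[OF _ grid_below_tendsto]
          isCont_integral_sliding_interval[OF F_on]) simp_all
    have "(\<lambda>n. local_average (1 / Suc n) f t) \<longlonglongrightarrow> f t"
      using N(2)[OF t(2)] t(1) unfolding local_average_def zero_extension_def by simp
    then show ?thesis unfolding grid_density_def inner by (rule limI)
  qed
  have "AE t in Leb01. t \<notin> N"
  proof -
    have "AE t in lebesgue. t \<notin> N"
      using N(1) by (intro AE_not_in) (simp add: negligible_iff_null_sets)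
    then have "AE t in lborel. t \<notin> N" by (simp add: AE_completion_iff)
    then show ?thesis unfolding Leb01_def by (subst AE_restrict_space_iff) (auto elim: eventually_mono)
  qed
  then show ?thesis using AE_space by eventually_elim (simp add: recovered)
qed

lemma measurable_integral_AE_cong:
  fixes G F :: "'a \<Rightarrow> 'b \<Rightarrow> real"
  assumes N: "sigma_finite_measure N"
    and G: "(\<lambda>p. G (fst p) (snd p)) \<in> M \<Otimes>\<^sub>M N \<rightarrow>\<^sub>M borel"
    and F: "\<And>x. x \<in> space M \<Longrightarrow> F x \<in> N \<rightarrow>\<^sub>M borel"
    and ae: "\<And>x. x \<in> space M \<Longrightarrow> AE t in N. G x t = F x t"
  shows "(\<lambda>x. \<integral>t. F x t \<partial>N) \<in> M \<rightarrow>\<^sub>M borel"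
proof -
  have "(\<lambda>x. \<integral>t. G x t \<partial>N) \<in> M \<rightarrow>\<^sub>M borel"
    using G by (intro sigma_finite_measure.borel_measurable_lebesgue_integral[OF N]) (simp add: case_prod_beta')
  moreover have "(\<integral>t. G x t \<partial>N) = (\<integral>t. F x t \<partial>N)" if x: "x \<in> space M" for x
    using measurable_Pair2[OF G x] F[OF x] ae[OF x] by (intro integral_cong_AE) simp_all
  ultimately show ?thesis by (simp cong: measurable_cong)
qed

lemma AE_Leb01_neq_1: "AE t in Leb01. t \<noteq> 1"
proof -
  have "AE t in lborel. t \<in> {0..1::real} \<longrightarrow> t \<noteq> 1"
    using AE_lborel_singleton[of "1::real"] by eventually_elim simp
  then show ?thesis unfolding Leb01_def by (subst AE_restrict_space_iff) auto
qed

lemma measurable_grid_integrand: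
  assumes p: "p > 1" and H: "H \<in> borel \<rightarrow>\<^sub>M borel"
  shows "(\<lambda>x. H (grid_right_lim (fst (fst x)) (snd x)) * \<bar>grid_density (snd (fst x)) (snd x)\<bar> powr \<alpha>)
    \<in> (borel_of_top skorohod_topology \<Otimes>\<^sub>M borel_of_top (weak_Lp_topology p)) \<Otimes>\<^sub>M Leb01 \<rightarrow>\<^sub>M borel"
proof -
  let ?Q = "(borel_of_top skorohod_topology \<Otimes>\<^sub>M borel_of_top (weak_Lp_topology p)) \<Otimes>\<^sub>M Leb01"
  have "(\<lambda>x. (fst (fst x), snd x)) \<in> ?Q \<rightarrow>\<^sub>M borel_of_top skorohod_topology \<Otimes>\<^sub>M Leb01"
    by measurable
  from measurable_compose[OF this measurable_grid_right_lim]
  have [measurable]: "(\<lambda>x. grid_right_lim (fst (fst x)) (snd x)) \<in> ?Q \<rightarrow>\<^sub>M borel"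
    by simp
  have "(\<lambda>x. (snd (fst x), snd x)) \<in> ?Q \<rightarrow>\<^sub>M borel_of_top (weak_Lp_topology p) \<Otimes>\<^sub>M Leb01"
    by measurable
  from measurable_compose[OF this measurable_grid_density[OF p]]
  have [measurable]: "(\<lambda>x. grid_density (snd (fst x)) (snd x)) \<in> ?Q \<rightarrow>\<^sub>M borel"
    by simp
  show ?thesis using H by measurable
qed

lemma AE_grid_integrand_eq:
  assumes s: "s \<in> cadlag" and \<phi>: "\<phi> \<in> Lp01 p" and p: "p \<ge> 1"
  shows "AE t in Leb01. H (grid_right_lim s t) * \<bar>grid_density \<phi> t\<bar> powr \<alpha> = H (s t) * \<bar>\<phi> t\<bar> powr \<alpha>"
  using AE_grid_density_eq[OF p \<phi>] AE_Leb01_neq_1 AE_space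
  by eventually_elim (simp add: grid_right_lim_cadlag[OF s])

theorem lemma6p5:
  fixes \<alpha> \<beta> :: real and H :: "real \<Rightarrow> real"
  assumes "\<alpha> > 1" and "1 < \<beta>" and "\<beta> < \<alpha>"
    and "continuous_on UNIV H"
  shows "(\<lambda>(s, \<phi>). \<integral>t. H (s t) * \<bar>\<phi> t\<bar> powr \<alpha> \<partial>Leb01)
           \<in> borel_of_top (prod_topology skorohod_topology (weak_Lp_topology \<beta>)) \<rightarrow>\<^sub>M borel"
proof -
  let ?P = "borel_of_top skorohod_topology \<Otimes>\<^sub>M borel_of_top (weak_Lp_topology \<beta>)"
  have H[measurable]: "H \<in> borel \<rightarrow>\<^sub>M borel"
    using assms(4) by (rule borel_measurable_continuous_onI)
  have "(\<lambda>x. \<integral>t. H (fst x t) * \<bar>snd x t\<bar> powr \<alpha> \<partial>Leb01) \<in> ?P \<rightarrow>\<^sub>M borel"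
  proof (rule measurable_integral_AE_cong[OF _ measurable_grid_integrand[OF assms(2) H]])
    show "sigma_finite_measure Leb01"
      using finite_measure_Leb01 unfolding finite_measure_def by blast
    fix x assume "x \<in> space ?P"
    then have s: "fst x \<in> cadlag" and \<phi>: "snd x \<in> Lp01 \<beta>" by (auto simp: space_pair_measure)
    have [measurable]: "fst x \<in> Leb01 \<rightarrow>\<^sub>M borel" "snd x \<in> Leb01 \<rightarrow>\<^sub>M borel"
      using measurable_cadlag_Leb01[OF s] \<phi> by (auto simp: Lp01_def)
    show "(\<lambda>t. H (fst x t) * \<bar>snd x t\<bar> powr \<alpha>) \<in> Leb01 \<rightarrow>\<^sub>M borel" by measurable
    show "AE t in Leb01. H (grid_right_lim (fst x) t) * \<bar>grid_density (snd x) t\<bar> powr \<alpha>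
        = H (fst x t) * \<bar>snd x t\<bar> powr \<alpha>"
      using assms(2) by (intro AE_grid_integrand_eq[OF s \<phi>]) simp
  qed
  then show ?thesis
    by (intro measurable_borel_of_top_prod_topology) (simp add: case_prod_beta')
qed

end
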